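(* Let $P\subseteq\mathbb R\times[0,\infty)$ be a countable set of points and let $\Gamma(P)$ be the graph with vertex set $P$ in which distinct $p_i=(x_i,y_i)$, $p_j=(x_j,y_j)$ are adjacent if and only if $|x_i-x_j|<e^{\frac12(y_i+y_j)}$. Then: (i) if $p_ip_j$ is an edge of $\Gamma(P)$ and $p_k\in P$ lies above the line segment $[p_i,p_j]$ (i.e. the segment $[p_i,p_j]$ intersects the vertical line through $p_k$ at a point below $p_k$), then at least one of $p_kp_i$, $p_kp_j$ is an edge of $\Gamma(P)$; (ii) if $p_ip_j$ and $p_kp_\ell$ are edges of $\Gamma(P)$ and the line segments $[p_i,p_j]$ and $[p_k,p_\ell]$ cross, then at least one of $p_ip_k, p_ip_\ell, p_jp_k, p_jp_\ell$ is an edge of $\Gamma(P)$. *)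

theory Defs
  imports "HOL-Analysis.Analysis"
begin

definition gamma_adj :: "real \<times> real \<Rightarrow> real \<times> real \<Rightarrow> bool" where
  "gamma_adj p q \<longleftrightarrow> p \<noteq> q \<and> \<bar>fst p - fst q\<bar> < exp ((snd p + snd q) / 2)"

definition gamma_edge :: "(real \<times> real) set \<Rightarrow> real \<times> real \<Rightarrow> real \<times> real \<Rightarrow> bool" where
  "gamma_edge P p q \<longleftrightarrow> p \<in> P \<and> q \<in> P \<and> gamma_adj p q"

definition above_segment :: "real \<times> real \<Rightarrow> real \<times> real \<Rightarrow> real \<times> real \<Rightarrow> bool" where
  "above_segment r p q \<longleftrightarrow> (\<exists>y. (fst r, y) \<in> closed_segment p q \<and> y < snd r)"

definition segments_cross :: "real \<times> real \<Rightarrow> real \<times> real \<Rightarrow> real \<times> real \<Rightarrow> real \<times> real \<Rightarrow> bool" where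
  "segments_cross a b c d \<longleftrightarrow>
     (\<exists>z. closed_segment a b \<inter> closed_segment c d = {z} \<and> z \<in> open_segment a b \<and> z \<in> open_segment c d)"

end

theory Submission
  imports Defs
begin

text \<open>
  Write \<open>E(p) = exp (y_p / 2)\<close>, so that \<open>p\<close> and \<open>q\<close> are adjacent iff
  \<open>|x_p - x_q| < E(p) E(q)\<close>. Along a segment the horizontal distances add up and the height
  stays between the heights of the endpoints.
  (i) If \<open>p_k\<close> lies above \<open>[p_i, p_j]\<close> with \<open>y_i \<le> y_j\<close>, then \<open>p_k\<close> is horizontally no farther
  from \<open>p_j\<close> than \<open>p_i\<close> is, and higher than \<open>p_i\<close>; so \<open>p_k p_j\<close> is an edge.
  (ii) Let \<open>[a, b]\<close> and \<open>[c, d]\<close> cross at \<open>z\<close>, with \<open>a, c\<close> the lower endpoints. By the triangle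
  inequality through \<open>z\<close>, \<open>|x_a - x_c| + |x_b - x_d| \<le> |x_a - x_b| + |x_c - x_d| < E(a)E(b) + E(c)E(d)\<close>,
  and since \<open>E(a) \<le> E(z) \<le> E(d)\<close> and \<open>E(c) \<le> E(z) \<le> E(b)\<close>, the rearrangement inequality bounds
  the right-hand side by \<open>E(a)E(c) + E(b)E(d)\<close>. Hence \<open>ac\<close> or \<open>bd\<close> is an edge.
\<close>

lemma closed_segment_fst_dist_add:
  fixes p q r :: "real \<times> real"
  assumes "r \<in> closed_segment p q"
  shows "\<bar>fst p - fst r\<bar> + \<bar>fst r - fst q\<bar> = \<bar>fst p - fst q\<bar>"
proof -
  obtain u where u: "0 \<le> u" "u \<le> 1" "r = (1 - u) *\<^sub>R p + u *\<^sub>R q"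
    using assms unfolding closed_segment_def by blast
  have "fst r = (1 - u) * fst p + u * fst q"
    using u(3) by simp
  then have "fst p - fst r = u * (fst p - fst q)" "fst r - fst q = (1 - u) * (fst p - fst q)"
    by (simp_all add: algebra_simps)
  then have "\<bar>fst p - fst r\<bar> + \<bar>fst r - fst q\<bar> = u * \<bar>fst p - fst q\<bar> + (1 - u) * \<bar>fst p - fst q\<bar>"
    using u(1,2) by (simp add: abs_mult)
  then show ?thesis
    by (simp add: algebra_simps)
qed

lemma closed_segment_snd_between:
  fixes p q r :: "real \<times> real"
  assumes "r \<in> closed_segment p q" and "snd p \<le> snd q"
  shows "snd p \<le> snd r" and "snd r \<le> snd q"
proof -
  obtain u where u: "0 \<le> u" "u \<le> 1" "r = (1 - u) *\<^sub>R p + u *\<^sub>R q"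
    using assms(1) unfolding closed_segment_def by blast
  have "snd r = (1 - u) * snd p + u * snd q"
    using u(3) by simp
  then have "snd r = snd p + u * (snd q - snd p)"
    by (simp add: algebra_simps)
  moreover have "0 \<le> u * (snd q - snd p)" "u * (snd q - snd p) \<le> snd q - snd p"
    using u(1,2) assms(2) by (simp_all add: mult_left_le_one_le)
  ultimately show "snd p \<le> snd r" "snd r \<le> snd q"
    by linarith+
qed

lemma gamma_adj_commute: "gamma_adj p q \<longleftrightarrow> gamma_adj q p"
  unfolding gamma_adj_def by (metis abs_minus_commute add.commute)

lemma gamma_edge_commute: "gamma_edge P p q \<longleftrightarrow> gamma_edge P q p"
  unfolding gamma_edge_def using gamma_adj_commute by blast

lemma above_segment_commute: "above_segment r p q \<longleftrightarrow> above_segment r q p"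
  unfolding above_segment_def by (simp add: closed_segment_commute)

lemma segments_cross_commute_left: "segments_cross a b c d \<longleftrightarrow> segments_cross b a c d"
  unfolding segments_cross_def by (simp add: closed_segment_commute open_segment_commute)

lemma segments_cross_commute_right: "segments_cross a b c d \<longleftrightarrow> segments_cross a b d c"
  unfolding segments_cross_def by (simp add: closed_segment_commute open_segment_commute)

lemma segments_cross_endpoints_distinct:
  assumes "segments_cross a b c d" and "p \<in> {a, b}" and "q \<in> {c, d}"
  shows "p \<noteq> q"
proof
  assume "p = q"
  obtain z where z: "closed_segment a b \<inter> closed_segment c d = {z}" "z \<in> open_segment a b"
    using assms(1) unfolding segments_cross_def by blast
  have "p \<in> closed_segment a b \<inter> closed_segment c d"
    using assms(2,3) \<open>p = q\<close> by auto
  with z show False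
    using assms(2) unfolding open_segment_def by auto
qed

lemma gamma_edge_above_segment_ordered:
  assumes edge: "gamma_edge P p q" and above: "above_segment r p q"
    and "r \<in> P" and "r \<noteq> q" and "snd p \<le> snd q"
  shows "gamma_edge P r q"
proof -
  obtain y where y: "(fst r, y) \<in> closed_segment p q" "y < snd r"
    using above unfolding above_segment_def by blast
  have "snd p < snd r"
    using closed_segment_snd_between(1)[OF y(1) \<open>snd p \<le> snd q\<close>] y(2) by simp
  have "\<bar>fst r - fst q\<bar> \<le> \<bar>fst p - fst q\<bar>"
    using closed_segment_fst_dist_add[OF y(1)] by simp
  also have "\<dots> < exp ((snd p + snd q) / 2)"
    using edge unfolding gamma_edge_def gamma_adj_def by blast
  also have "\<dots> \<le> exp ((snd r + snd q) / 2)"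
    using \<open>snd p < snd r\<close> by simp
  finally show ?thesis
    using assms(1,3,4) unfolding gamma_edge_def gamma_adj_def by blast
qed

lemma gamma_edge_above_segment:
  assumes "gamma_edge P p q" and "above_segment r p q" and "r \<in> P"
  shows "gamma_edge P r p \<or> gamma_edge P r q"
proof (cases "r = p \<or> r = q")
  case True
  then show ?thesis
    using assms(1) gamma_edge_commute by blast
next
  case False
  show ?thesis
  proof (cases "snd p \<le> snd q")
    case True
    then show ?thesis
      using gamma_edge_above_segment_ordered assms False by blast
  next
    case False
    then show ?thesis
      using gamma_edge_above_segment_ordered[of P q p r] assms \<open>\<not> (r = p \<or> r = q)\<close>
      by (simp add: gamma_edge_commute above_segment_commute)
  qed
qed

lemma crossing_lower_or_upper_close:
  fixes a b c d z :: "real \<times> real"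
  assumes ab: "\<bar>fst a - fst b\<bar> < exp ((snd a + snd b) / 2)"
    and cd: "\<bar>fst c - fst d\<bar> < exp ((snd c + snd d) / 2)"
    and z_ab: "z \<in> closed_segment a b" and z_cd: "z \<in> closed_segment c d"
    and "snd a \<le> snd b" and "snd c \<le> snd d"
  shows "\<bar>fst a - fst c\<bar> < exp ((snd a + snd c) / 2) \<or> \<bar>fst b - fst d\<bar> < exp ((snd b + snd d) / 2)"
proof (rule ccontr)
  assume far: "\<not> ?thesis"
  define A B C D where "A = exp (snd a / 2)" and "B = exp (snd b / 2)"
    and "C = exp (snd c / 2)" and "D = exp (snd d / 2)"
  have exp_half_add: "exp ((s + t) / 2) = exp (s / 2) * exp (t / 2)" for s t :: real
    by (simp add: add_divide_distrib exp_add)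
  have "snd a \<le> snd z" "snd z \<le> snd b" "snd c \<le> snd z" "snd z \<le> snd d"
    using closed_segment_snd_between[OF z_ab \<open>snd a \<le> snd b\<close>]
      closed_segment_snd_between[OF z_cd \<open>snd c \<le> snd d\<close>] by simp_all
  then have "A \<le> D" "C \<le> B"
    unfolding A_def B_def C_def D_def by simp_all
  then have rearrangement: "A * B + C * D \<le> A * C + B * D"
    using mult_nonneg_nonneg[of "B - C" "D - A"] by (simp add: algebra_simps)
  have "\<bar>fst a - fst c\<bar> + \<bar>fst b - fst d\<bar> \<le> \<bar>fst a - fst b\<bar> + \<bar>fst c - fst d\<bar>"
    using closed_segment_fst_dist_add[OF z_ab] closed_segment_fst_dist_add[OF z_cd] by linarith
  also have "\<dots> < A * B + C * D"
    using ab cd unfolding A_def B_def C_def D_def exp_half_add by linarith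
  also have "\<dots> \<le> \<bar>fst a - fst c\<bar> + \<bar>fst b - fst d\<bar>"
    using rearrangement far unfolding A_def B_def C_def D_def exp_half_add by linarith
  finally show False by simp
qed

lemma gamma_edge_crossing_ordered:
  assumes ab: "gamma_edge P a b" and cd: "gamma_edge P c d" and cross: "segments_cross a b c d"
    and "snd a \<le> snd b" and "snd c \<le> snd d"
  shows "gamma_edge P a c \<or> gamma_edge P b d"
proof -
  obtain z where z: "closed_segment a b \<inter> closed_segment c d = {z}"
    using cross unfolding segments_cross_def by blast
  have close: "\<bar>fst a - fst b\<bar> < exp ((snd a + snd b) / 2)" "\<bar>fst c - fst d\<bar> < exp ((snd c + snd d) / 2)"
    using ab cd unfolding gamma_edge_def gamma_adj_def by simp_all
  have "\<bar>fst a - fst c\<bar> < exp ((snd a + snd c) / 2) \<or> \<bar>fst b - fst d\<bar> < exp ((snd b + snd d) / 2)"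
    using z by (intro crossing_lower_or_upper_close[OF close, of z] assms(4,5)) blast+
  moreover have "a \<noteq> c" "b \<noteq> d"
    using segments_cross_endpoints_distinct[OF cross, of a c]
      segments_cross_endpoints_distinct[OF cross, of b d] by simp_all
  ultimately have "gamma_adj a c \<or> gamma_adj b d"
    unfolding gamma_adj_def by blast
  then show ?thesis
    using ab cd unfolding gamma_edge_def by blast
qed

lemma gamma_edge_crossing:
  assumes "gamma_edge P a b" and "gamma_edge P c d" and "segments_cross a b c d"
  shows "gamma_edge P a c \<or> gamma_edge P a d \<or> gamma_edge P b c \<or> gamma_edge P b d"
proof -
  have sym: "gamma_edge P b a" "gamma_edge P d c"
    "segments_cross b a c d" "segments_cross a b d c" "segments_cross b a d c"
    using assms gamma_edge_commute segments_cross_commute_left segments_cross_commute_right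
    by blast+
  consider "snd a \<le> snd b" | "snd b \<le> snd a" by linarith
  then show ?thesis
  proof cases
    case 1
    consider "snd c \<le> snd d" | "snd d \<le> snd c" by linarith
    then show ?thesis
      using 1 gamma_edge_crossing_ordered assms sym by cases blast+
  next
    case 2
    consider "snd c \<le> snd d" | "snd d \<le> snd c" by linarith
    then show ?thesis
      using 2 gamma_edge_crossing_ordered assms sym by cases blast+
  qed
qed

theorem lemma2p1:
  fixes P :: "(real \<times> real) set"
  assumes "countable P"
    and "\<forall>p\<in>P. snd p \<ge> 0"
  shows "(\<forall>pi\<in>P. \<forall>pj\<in>P. \<forall>pk\<in>P.
           gamma_edge P pi pj \<and> above_segment pk pi pj
             \<longrightarrow> gamma_edge P pk pi \<or> gamma_edge P pk pj)
    \<and> (\<forall>pi\<in>P. \<forall>pj\<in>P. \<forall>pk\<in>P. \<forall>pl\<in>P.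
           gamma_edge P pi pj \<and> gamma_edge P pk pl \<and> segments_cross pi pj pk pl
             \<longrightarrow> gamma_edge P pi pk \<or> gamma_edge P pi pl \<or> gamma_edge P pj pk \<or> gamma_edge P pj pl)"
  using gamma_edge_above_segment gamma_edge_crossing by auto

end
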